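(* Let $P\subset\mathbb R^3$ be a simple $3$-polytope with irredundant representation $P=\{\mathbf{x}\in\mathbb R^3\colon \mathbf{a}_i\mathbf{x}+b_i\geqslant 0,\ i=1,\dots,m\}$, and let $\Gamma$ be a subgraph without isolated vertices of the edge-vertex graph $G(P)$ of $P$. Then the graph-truncation $P_{\Gamma}$ is a simple polytope if and only if the graph $\Gamma$ has no vertices of valency $2$.
   Context: A polytope $P=\{\mathbf{x}\in \mathbb R^n\colon \mathbf{a}_i\mathbf{x}+b_i\geqslant 0, i=1,\dots,m\}$ with irredundant representation has facets $F_i=P\cap\{\mathbf{a}_i\mathbf{x}+b_i=0\}$. An $n$-polytope is simple if every vertex lies in exactly $n$ facets. The edge-vertex graph $G(P)$ has the vertices of $P$ as vertices and the edges of $P$ as edges. Graph-truncation: for each edge $E_{i,j}=F_i\cap F_j$ of $P$ in $\Gamma$ consider the halfspace $\mathcal{H}^+_{ij,\varepsilon}=\{\mathbf{x}\in\mathbb R^3\colon(\mathbf{a}_i+\mathbf{a}_j)\mathbf{x}+(b_i+b_j)\geqslant\varepsilon\}$ and set $P_{\Gamma,\varepsilon}=P\cap\bigcap_{E_{i,j}\in\Gamma}\mathcal{H}^+_{ij,\varepsilon}$. For all sufficiently small $\varepsilon>0$ the combinatorial type of $P_{\Gamma,\varepsilon}$ does not depend on $\varepsilon$; this combinatorial polytope is denoted $P_\Gamma$ (the graph-truncation of $P$ along $\Gamma$). Its facets correspond bijectively to the facets $F_i$ of $P$ together with the edges $F_i\cap F_j\in\Gamma$. *)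

theory Defs
  imports "HOL-Analysis.Analysis"
begin

definition simple_polytope :: "'a::euclidean_space set \<Rightarrow> bool" where
  "simple_polytope P \<longleftrightarrow> polytope P \<and>
     (\<forall>v. v extreme_point_of P \<longrightarrow> int (card {F. F facet_of P \<and> v \<in> F}) = aff_dim P)"

definition ineq_poly :: "nat \<Rightarrow> (nat \<Rightarrow> real^3) \<Rightarrow> (nat \<Rightarrow> real) \<Rightarrow> (real^3) set" where
  "ineq_poly m a b = {x. \<forall>i<m. a i \<bullet> x + b i \<ge> 0}"

definition irredundant :: "nat \<Rightarrow> (nat \<Rightarrow> real^3) \<Rightarrow> (nat \<Rightarrow> real) \<Rightarrow> bool" where
  "irredundant m a b \<longleftrightarrow>
     (\<forall>k<m. {x. \<forall>i<m. i \<noteq> k \<longrightarrow> a i \<bullet> x + b i \<ge> 0} \<noteq> ineq_poly m a b)"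

definition facet_set :: "(nat \<Rightarrow> real^3) \<Rightarrow> (nat \<Rightarrow> real) \<Rightarrow> (real^3) set \<Rightarrow> nat \<Rightarrow> (real^3) set" where
  "facet_set a b P i = P \<inter> {x. a i \<bullet> x + b i = 0}"

text \<open>The truncated polytope P_{Gamma,eps}; Gamma is a set of index pairs (i,j), i<j,
  each standing for the edge F_i cap F_j.\<close>
definition graph_trunc ::
  "(nat \<Rightarrow> real^3) \<Rightarrow> (nat \<Rightarrow> real) \<Rightarrow> (real^3) set \<Rightarrow> (nat \<times> nat) set \<Rightarrow> real \<Rightarrow> (real^3) set" where
  "graph_trunc a b P \<Gamma> \<epsilon> = P \<inter> {x. \<forall>(i,j)\<in>\<Gamma>. (a i + a j) \<bullet> x + (b i + b j) \<ge> \<epsilon>}"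

definition valency ::
  "(nat \<Rightarrow> real^3) \<Rightarrow> (nat \<Rightarrow> real) \<Rightarrow> (real^3) set \<Rightarrow> (nat \<times> nat) set \<Rightarrow> real^3 \<Rightarrow> nat" where
  "valency a b P \<Gamma> v = card {(i,j)\<in>\<Gamma>. v \<in> facet_set a b P i \<inter> facet_set a b P j}"

end

theory Submission
  imports Defs
begin

text \<open>The truncation is cut out by the inequalities \<open>y\<^sub>k \<ge> 0\<close> of \<open>P\<close> together with one
  inequality \<open>y\<^sub>i + y\<^sub>j \<ge> \<epsilon>\<close> per edge of \<open>\<Gamma>\<close>; for small \<open>\<epsilon>\<close> each of them defines a facet,
  so the truncation is simple iff exactly three of them are active at each of its vertices
  (at least three always are, since the active normals span). For small \<open>\<epsilon>\<close> the inequalities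
  nearly active at a point of the truncation all belong to the three facets through one vertex
  \<open>v\<close> of \<open>P\<close>. If \<open>\<Gamma>\<close> has zero, one or three edges among these facets, a case check on the
  nonnegative values \<open>y\<^sub>k\<close> shows that at most three inequalities are active. If it has
  exactly two, meeting in the facet \<open>c\<close>, then the point at distance \<open>\<epsilon>\<close> from \<open>v\<close> on the
  edge of \<open>P\<close> leaving \<open>c\<close> is a vertex of the truncation with four active inequalities.\<close>

section \<open>Polyhedra given by finite systems of inequalities\<close>

definition polyhedron_of :: "'i set \<Rightarrow> ('i \<Rightarrow> 'a::euclidean_space) \<Rightarrow> ('i \<Rightarrow> real) \<Rightarrow> 'a set" where
  "polyhedron_of K c d = {x. \<forall>k\<in>K. c k \<bullet> x + d k \<ge> 0}"

definition active :: "'i set \<Rightarrow> ('i \<Rightarrow> 'a::euclidean_space) \<Rightarrow> ('i \<Rightarrow> real) \<Rightarrow> 'a \<Rightarrow> 'i set" where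
  "active K c d x = {k\<in>K. c k \<bullet> x + d k = 0}"

definition constraint_face :: "'i set \<Rightarrow> ('i \<Rightarrow> 'a::euclidean_space) \<Rightarrow> ('i \<Rightarrow> real) \<Rightarrow> 'i \<Rightarrow> 'a set" where
  "constraint_face K c d k = polyhedron_of K c d \<inter> {x. c k \<bullet> x + d k = 0}"

text \<open>The inequalities of such a system correspond bijectively to the facets of the polyhedron.\<close>
definition facet_defining :: "'i set \<Rightarrow> ('i \<Rightarrow> 'a::euclidean_space) \<Rightarrow> ('i \<Rightarrow> real) \<Rightarrow> bool" where
  "facet_defining K c d \<longleftrightarrow> (\<exists>p. \<forall>k\<in>K. c k \<bullet> p + d k > 0) \<and>
     (\<forall>k\<in>K. \<exists>w. c k \<bullet> w + d k = 0 \<and> (\<forall>l\<in>K. l \<noteq> k \<longrightarrow> c l \<bullet> w + d l > 0))"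

lemma polyhedron_of_eq_INT: "polyhedron_of K c d = (\<Inter>k\<in>K. {x. - d k \<le> c k \<bullet> x})"
  unfolding polyhedron_of_def by force

lemma convex_polyhedron_of: "convex (polyhedron_of K c d)"
  unfolding polyhedron_of_eq_INT by (intro convex_INT convex_halfspace_ge)

lemma polyhedron_polyhedron_of: "finite K \<Longrightarrow> polyhedron (polyhedron_of K c d)"
  unfolding polyhedron_of_eq_INT by (intro polyhedron_Inter) (auto intro: polyhedron_halfspace_ge)

lemma finite_active: "finite K \<Longrightarrow> finite (active K c d x)"
  by (simp add: active_def)

lemma inner_affine_combination:
  fixes c :: "'a::real_inner"
  shows "c \<bullet> ((1 - t) *\<^sub>R p + t *\<^sub>R q) + d = (1 - t) * (c \<bullet> p + d) + t * (c \<bullet> q + d)"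
  by (simp add: algebra_simps)

lemma open_strict_polyhedron: "finite K \<Longrightarrow> open {x::'a::euclidean_space. \<forall>k\<in>K. c k \<bullet> x + d k > 0}"
proof -
  assume "finite K"
  have "{x::'a. \<forall>k\<in>K. c k \<bullet> x + d k > 0} = (\<Inter>k\<in>K. {x. - d k < c k \<bullet> x})" by force
  then show ?thesis using \<open>finite K\<close> by (simp add: open_INT open_halfspace_gt)
qed

lemma eq_0_if_orthogonal_spanning:
  fixes v :: "'a::euclidean_space"
  assumes "span (c ` T) = UNIV" "\<forall>k\<in>T. c k \<bullet> v = 0"
  shows "v = 0"
proof -
  have "orthogonal v v"
    by (rule orthogonal_to_span[of v "c ` T" v]) (use assms in \<open>auto simp: orthogonal_def inner_commute\<close>)
  then show ?thesis by (simp add: orthogonal_def)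
qed

lemma eventually_at_right_0_mult_less:
  fixes s :: real assumes "s > 0"
  shows "eventually (\<lambda>t. t * C < s) (at_right 0)"
proof -
  have "((\<lambda>t. t * C) \<longlongrightarrow> 0 * C) (at_right (0::real))"
    by (intro tendsto_intros)
  then show ?thesis using assms by (auto dest: order_tendstoD(2))
qed

lemma eventually_at_right_0_less: "0 < s \<Longrightarrow> eventually (\<lambda>e. e < (s::real)) (at_right 0)"
  by (rule eventually_at_rightI[of 0 s]) auto

text \<open>If the active normals at \<open>x\<close> missed a direction \<open>w\<close>, then \<open>x\<close> would be the midpoint
  of \<open>x - t w\<close> and \<open>x + t w\<close>, both feasible for small \<open>t\<close>.\<close>
lemma span_active_if_extreme_point:
  assumes "finite K" "x extreme_point_of polyhedron_of K c d"
  shows "span (c ` active K c d x) = UNIV"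
proof (rule ccontr)
  let ?A = "active K c d x"
  assume "span (c ` ?A) \<noteq> UNIV"
  then obtain w where w: "w \<noteq> 0" "\<forall>z\<in>span (c ` ?A). w \<bullet> z = 0"
    using span_not_UNIV_orthogonal by blast
  have x: "x \<in> polyhedron_of K c d" using assms(2) extreme_point_of_def by blast
  have "\<forall>k\<in>K - ?A. eventually (\<lambda>t. t * \<bar>c k \<bullet> w\<bar> < c k \<bullet> x + d k) (at_right 0)"
  proof
    fix k assume "k \<in> K - ?A"
    then have "c k \<bullet> x + d k > 0" using x by (auto simp: polyhedron_of_def active_def le_less)
    then show "eventually (\<lambda>t. t * \<bar>c k \<bullet> w\<bar> < c k \<bullet> x + d k) (at_right 0)"
      by (rule eventually_at_right_0_mult_less)
  qed
  then have "eventually (\<lambda>t. \<forall>k\<in>K - ?A. t * \<bar>c k \<bullet> w\<bar> < c k \<bullet> x + d k) (at_right 0)"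
    using assms(1) by (intro eventually_ball_finite) auto
  then obtain t where t: "t > 0" "\<forall>k\<in>K - ?A. t * \<bar>c k \<bullet> w\<bar> < c k \<bullet> x + d k"
    using eventually_happens'[OF trivial_limit_at_right_real eventually_conj[OF eventually_at_right_less]]
    by blast
  have feasible: "x + s *\<^sub>R w \<in> polyhedron_of K c d" if "\<bar>s\<bar> = t" for s
    unfolding polyhedron_of_def
  proof (intro CollectI ballI)
    fix k assume k: "k \<in> K"
    show "c k \<bullet> (x + s *\<^sub>R w) + d k \<ge> 0"
    proof (cases "k \<in> ?A")
      case True
      then have "c k \<bullet> w = 0" using w(2) span_base[of "c k" "c ` ?A"] by (auto simp: inner_commute)
      then show ?thesis using True by (simp add: active_def inner_add_right)
    next
      case False
      have "\<bar>s * (c k \<bullet> w)\<bar> < c k \<bullet> x + d k" using that t(2) k False by (simp add: abs_mult)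
      then show ?thesis by (simp add: inner_add_right abs_less_iff)
    qed
  qed
  have "x \<in> open_segment (x + (-t) *\<^sub>R w) (x + t *\<^sub>R w)"
  proof -
    have "(x + (-t) *\<^sub>R w) + (x + t *\<^sub>R w) = 2 *\<^sub>R x" by (simp add: scaleR_2)
    then have "x = midpoint (x + (-t) *\<^sub>R w) (x + t *\<^sub>R w)" by (simp add: midpoint_def)
    moreover have "x + (-t) *\<^sub>R w \<noteq> x + t *\<^sub>R w"
      using w(1) t(1) scaleR_cancel_right[of "-t" w t] by auto
    ultimately show ?thesis by (metis midpoint_in_open_segment)
  qed
  with feasible[of "-t"] feasible[of t] t(1) assms(2) show False
    unfolding extreme_point_of_def by auto
qed

lemma extreme_point_if_span_active:
  assumes "x \<in> polyhedron_of K c d" "span (c ` active K c d x) = UNIV"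
  shows "x extreme_point_of polyhedron_of K c d"
  unfolding extreme_point_of_def
proof (intro conjI assms(1) ballI notI)
  fix p q assume pq: "p \<in> polyhedron_of K c d" "q \<in> polyhedron_of K c d" "x \<in> open_segment p q"
  then obtain u where u: "p \<noteq> q" "0 < u" "u < 1" "x = (1 - u) *\<^sub>R p + u *\<^sub>R q"
    by (auto simp: in_segment)
  have "c k \<bullet> (p - q) = 0" if k: "k \<in> active K c d x" for k
  proof -
    have "(1 - u) * (c k \<bullet> p + d k) + u * (c k \<bullet> q + d k) = c k \<bullet> x + d k"
      unfolding u(4) by (rule inner_affine_combination[symmetric])
    also have "\<dots> = 0" using k by (simp add: active_def)
    finally have "(1 - u) * (c k \<bullet> p + d k) + u * (c k \<bullet> q + d k) = 0" .
    moreover have "c k \<bullet> p + d k \<ge> 0" "c k \<bullet> q + d k \<ge> 0"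
      using pq k by (auto simp: polyhedron_of_def active_def)
    ultimately have "(1 - u) * (c k \<bullet> p + d k) = 0" "u * (c k \<bullet> q + d k) = 0"
      using u(2,3) by (simp_all add: add_nonneg_eq_0_iff)
    then have "c k \<bullet> p + d k = 0" "c k \<bullet> q + d k = 0" using u(2,3) by auto
    then show ?thesis by (simp add: inner_diff_right)
  qed
  then have "p - q = 0" using eq_0_if_orthogonal_spanning[OF assms(2)] by blast
  then show False using u(1) by simp
qed

lemma DIM_le_card_active:
  assumes "finite K" "x extreme_point_of polyhedron_of K (c :: 'i \<Rightarrow> 'a::euclidean_space) d"
  shows "DIM('a) \<le> card (active K c d x)"
proof -
  have "DIM('a) = dim (UNIV :: 'a set)" by simp
  also have "\<dots> \<le> card (c ` active K c d x)"
    using span_active_if_extreme_point[OF assms] finite_imageI[OF finite_active[OF assms(1)]]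
    by (intro dim_le_card) auto
  also have "\<dots> \<le> card (active K c d x)" using finite_active[OF assms(1)] by (rule card_image_le)
  finally show ?thesis .
qed

lemma exists_dual_vector:
  fixes c :: "'i \<Rightarrow> 'a::euclidean_space"
  assumes "span (c ` T) = UNIV" "finite T" "card T \<le> DIM('a)" "t \<in> T"
  shows "\<exists>w. c t \<bullet> w = 1 \<and> (\<forall>k\<in>T - {t}. c k \<bullet> w = 0)"
proof -
  have "span (c ` (T - {t})) \<noteq> UNIV"
  proof
    assume "span (c ` (T - {t})) = UNIV"
    then have "DIM('a) \<le> card (c ` (T - {t}))" using assms(2) by (metis dim_UNIV dim_le_card finite_Diff finite_imageI order_refl)
    also have "\<dots> \<le> card (T - {t})" using assms(2) by (intro card_image_le) simp
    also have "\<dots> < card T" using assms(2,4) by (rule card_Diff1_less)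
    finally show False using assms(3) by simp
  qed
  then obtain w where w: "w \<noteq> 0" "\<forall>z\<in>span (c ` (T - {t})). w \<bullet> z = 0"
    using span_not_UNIV_orthogonal by blast
  have orth: "c k \<bullet> w = 0" if "k \<in> T - {t}" for k
    using w(2) span_base[of "c k" "c ` (T - {t})"] that by (auto simp: inner_commute)
  have "c t \<bullet> w \<noteq> 0"
    using orth eq_0_if_orthogonal_spanning[OF assms(1), of w] w(1) by auto
  with orth show ?thesis by (intro exI[of _ "(1 / (c t \<bullet> w)) *\<^sub>R w"]) simp
qed

lemma facet_defining_normal_nonzero:
  assumes "facet_defining K c d" "k \<in> K"
  shows "c k \<noteq> 0"
proof
  assume "c k = 0"
  obtain p w where "c k \<bullet> p + d k > 0" "c k \<bullet> w + d k = 0"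
    using assms unfolding facet_defining_def by blast
  with \<open>c k = 0\<close> show False by simp
qed

lemma aff_dim_polyhedron_of:
  fixes c :: "'i \<Rightarrow> 'a::euclidean_space"
  assumes "finite K" "\<forall>k\<in>K. c k \<bullet> p + d k > 0"
  shows "aff_dim (polyhedron_of K c d) = DIM('a)"
proof -
  let ?O = "{x::'a. \<forall>k\<in>K. c k \<bullet> x + d k > 0}"
  have "aff_dim ?O = DIM('a)"
    using assms by (intro aff_dim_open open_strict_polyhedron) auto
  moreover have "?O \<subseteq> polyhedron_of K c d" by (auto simp: polyhedron_of_def less_imp_le)
  then have "aff_dim ?O \<le> aff_dim (polyhedron_of K c d)" by (rule aff_dim_subset)
  ultimately have "DIM('a) \<le> aff_dim (polyhedron_of K c d)" by simp
  then show ?thesis using aff_dim_le_DIM[of "polyhedron_of K c d"] by simp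
qed

lemma constraint_face_face_of:
  assumes "k \<in> K"
  shows "constraint_face K c d k face_of polyhedron_of K c d"
proof -
  have "constraint_face K c d k = polyhedron_of K c d \<inter> {x. c k \<bullet> x = - d k}"
    by (auto simp: constraint_face_def)
  also have "\<dots> face_of polyhedron_of K c d"
    using assms by (intro face_of_Int_supporting_hyperplane_ge convex_polyhedron_of)
      (auto simp: polyhedron_of_def)
  finally show ?thesis .
qed

lemma aff_dim_constraint_face_le:
  fixes c :: "'i \<Rightarrow> 'a::euclidean_space"
  assumes "c k \<noteq> 0"
  shows "aff_dim (constraint_face K c d k) \<le> DIM('a) - 1"
proof -
  have "constraint_face K c d k \<subseteq> {x. c k \<bullet> x = - d k}" by (auto simp: constraint_face_def)
  then have "aff_dim (constraint_face K c d k) \<le> aff_dim {x. c k \<bullet> x = - d k}" by (rule aff_dim_subset)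
  then show ?thesis using aff_dim_hyperplane[OF assms] by simp
qed

text \<open>Near a point where only the \<open>k\<close>-th inequality is active, the face lies in a hyperplane
  but contains an open piece of it.\<close>
lemma constraint_face_facet_of:
  fixes c :: "'i \<Rightarrow> 'a::euclidean_space"
  assumes "finite K" "facet_defining K c d" "k \<in> K"
  shows "constraint_face K c d k facet_of polyhedron_of K c d"
proof -
  obtain p where p: "\<forall>k\<in>K. c k \<bullet> p + d k > 0"
    using assms(2) by (auto simp: facet_defining_def)
  obtain w where w: "c k \<bullet> w + d k = 0" "\<forall>l\<in>K. l \<noteq> k \<longrightarrow> c l \<bullet> w + d l > 0"
    using assms(2,3) by (auto simp: facet_defining_def)
  have ck: "c k \<noteq> 0" using facet_defining_normal_nonzero[OF assms(2,3)] .
  let ?H = "{x. c k \<bullet> x = - d k}"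
  let ?O = "{x::'a. \<forall>l\<in>K - {k}. c l \<bullet> x + d l > 0}"
  have "w \<in> ?H \<inter> ?O" using w by auto
  then have HO: "aff_dim (?H \<inter> ?O) = aff_dim ?H"
    using assms(1) by (intro aff_dim_convex_Int_open convex_hyperplane open_strict_polyhedron) auto
  have "?H \<inter> ?O \<subseteq> constraint_face K c d k"
  proof
    fix x assume x: "x \<in> ?H \<inter> ?O"
    then have "c l \<bullet> x + d l \<ge> 0" if "l \<in> K" for l
      using that by (cases "l = k") (auto simp: le_less)
    with x show "x \<in> constraint_face K c d k" by (simp add: constraint_face_def polyhedron_of_def)
  qed
  then have "aff_dim (?H \<inter> ?O) \<le> aff_dim (constraint_face K c d k)" by (rule aff_dim_subset)
  then have "DIM('a) - 1 \<le> aff_dim (constraint_face K c d k)"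
    using HO aff_dim_hyperplane[OF ck] by simp
  then have "aff_dim (constraint_face K c d k) = DIM('a) - 1"
    using aff_dim_constraint_face_le[of c k K d, OF ck] by simp
  moreover have "w \<in> constraint_face K c d k"
    using w by (auto simp: constraint_face_def polyhedron_of_def less_imp_le)
  ultimately show ?thesis
    using constraint_face_face_of[OF assms(3)] aff_dim_polyhedron_of[OF assms(1) p]
    by (auto simp: facet_of_def)
qed

text \<open>A facet \<open>F\<close> has a relative interior point \<open>q\<close>; some inequality is active at \<open>q\<close>
  (else \<open>q\<close> is interior), and its face contains \<open>F\<close> and has the same dimension.\<close>
lemma facet_of_polyhedron_of_eq_constraint_face:
  assumes "finite K" "facet_defining K c d" "F facet_of polyhedron_of K c d"
  obtains k where "k \<in> K" "F = constraint_face K c d k"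
proof -
  let ?Q = "polyhedron_of K c d"
  obtain p where p: "\<forall>k\<in>K. c k \<bullet> p + d k > 0"
    using assms(2) by (auto simp: facet_defining_def)
  have F: "F face_of ?Q" "F \<noteq> {}" "F \<noteq> ?Q"
    using assms(3) by (auto simp: facet_of_def)
  then obtain q where q: "q \<in> rel_interior F"
    using face_of_imp_convex rel_interior_eq_empty by blast
  have qQ: "q \<in> ?Q" using F(1) q face_of_imp_subset rel_interior_subset by blast
  have "\<exists>k\<in>K. c k \<bullet> q + d k = 0"
  proof (rule ccontr)
    assume "\<not> ?thesis"
    then have "q \<in> {x. \<forall>k\<in>K. c k \<bullet> x + d k > 0}"
      using qQ by (auto simp: polyhedron_of_def le_less)
    moreover have "{x. \<forall>k\<in>K. c k \<bullet> x + d k > 0} \<subseteq> ?Q"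
      by (auto simp: polyhedron_of_def less_imp_le)
    ultimately have "q \<in> rel_interior ?Q"
      using assms(1) open_strict_polyhedron interior_maximal interior_subset_rel_interior by blast
    then have "?Q \<subseteq> F" using F(1) q rel_interior_subset subset_of_face_of by blast
    then show False using F face_of_imp_subset by blast
  qed
  then obtain k where k: "k \<in> K" "c k \<bullet> q + d k = 0" by blast
  have "q \<in> constraint_face K c d k" using qQ k(2) by (simp add: constraint_face_def)
  then have "F \<subseteq> constraint_face K c d k"
    using subset_of_face_of[OF constraint_face_face_of[OF k(1)] face_of_imp_subset[OF F(1)]] q
    by blast
  then have "F face_of constraint_face K c d k"
    by (rule face_of_subset[OF F(1)]) (auto simp: constraint_face_def)
  moreover have "aff_dim (constraint_face K c d k) \<le> aff_dim F"
    using assms(3) aff_dim_polyhedron_of[OF assms(1) p]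
      aff_dim_constraint_face_le[of c k K d, OF facet_defining_normal_nonzero[OF assms(2) k(1)]]
    by (simp add: facet_of_def)
  ultimately have "F = constraint_face K c d k"
    using face_of_aff_dim_lt[OF face_of_imp_convex[OF constraint_face_face_of[OF k(1)]]]
    by fastforce
  with k(1) that show thesis by blast
qed

lemma card_facets_containing_eq_card_active:
  assumes "finite K" "facet_defining K c d" "x \<in> polyhedron_of K c d"
  shows "card {F. F facet_of polyhedron_of K c d \<and> x \<in> F} = card (active K c d x)"
proof -
  have "{F. F facet_of polyhedron_of K c d \<and> x \<in> F} = constraint_face K c d ` active K c d x"
  proof (intro equalityI subsetI)
    fix F assume "F \<in> {F. F facet_of polyhedron_of K c d \<and> x \<in> F}"
    then show "F \<in> constraint_face K c d ` active K c d x"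
      using facet_of_polyhedron_of_eq_constraint_face[OF assms(1,2)]
      by (auto simp: active_def constraint_face_def image_iff)
  next
    fix F assume "F \<in> constraint_face K c d ` active K c d x"
    then show "F \<in> {F. F facet_of polyhedron_of K c d \<and> x \<in> F}"
      using constraint_face_facet_of[OF assms(1,2)] assms(3)
      by (auto simp: active_def constraint_face_def)
  qed
  moreover have "inj_on (constraint_face K c d) (active K c d x)"
  proof (rule inj_onI)
    fix k l assume kl: "k \<in> active K c d x" "l \<in> active K c d x"
      "constraint_face K c d k = constraint_face K c d l"
    obtain w where w: "c k \<bullet> w + d k = 0" "\<forall>j\<in>K. j \<noteq> k \<longrightarrow> c j \<bullet> w + d j > 0"
      using assms(2) kl(1) by (auto simp: facet_defining_def active_def)
    then have "w \<in> constraint_face K c d k"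
      by (auto simp: constraint_face_def polyhedron_of_def less_imp_le)
    then have "w \<in> constraint_face K c d l" using kl(3) by simp
    then have "c l \<bullet> w + d l = 0" by (simp add: constraint_face_def)
    then show "k = l" using w kl(2) by (auto simp: active_def)
  qed
  ultimately show ?thesis by (simp add: card_image)
qed

lemma simple_polytope_polyhedron_of_iff:
  fixes c :: "'i \<Rightarrow> 'a::euclidean_space"
  assumes "finite K" "facet_defining K c d" "bounded (polyhedron_of K c d)"
  shows "simple_polytope (polyhedron_of K c d) \<longleftrightarrow>
    (\<forall>x. x extreme_point_of polyhedron_of K c d \<longrightarrow> card (active K c d x) = DIM('a))"
proof -
  obtain p where "\<forall>k\<in>K. c k \<bullet> p + d k > 0"
    using assms(2) by (auto simp: facet_defining_def)
  then have "aff_dim (polyhedron_of K c d) = DIM('a)" by (rule aff_dim_polyhedron_of[OF assms(1)])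
  moreover have "polytope (polyhedron_of K c d)"
    using assms(1,3) polyhedron_polyhedron_of polytope_eq_bounded_polyhedron by blast
  moreover have "int (card {F. F facet_of polyhedron_of K c d \<and> x \<in> F}) = DIM('a)
      \<longleftrightarrow> card (active K c d x) = DIM('a)" if "x extreme_point_of polyhedron_of K c d" for x
    using that card_facets_containing_eq_card_active[OF assms(1,2)] by (simp add: extreme_point_of_def)
  ultimately show ?thesis by (simp add: simple_polytope_def)
qed

lemma slack_pos_at_interior_point:
  assumes "x \<in> interior (polyhedron_of K c d)" "k \<in> K" "c k \<noteq> 0"
  shows "0 < c k \<bullet> x + d k"
proof (rule ccontr)
  obtain r where r: "r > 0" "ball x r \<subseteq> polyhedron_of K c d"
    using assms(1) mem_interior by blast
  assume "\<not> 0 < c k \<bullet> x + d k"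
  moreover have "0 \<le> c k \<bullet> x + d k"
    using assms(1,2) interior_subset by (force simp: polyhedron_of_def)
  ultimately have x0: "c k \<bullet> x + d k = 0" by simp
  define t where "t = r / (2 * norm (c k))"
  have t: "t > 0" "t * norm (c k) < r" using r(1) assms(3) by (simp_all add: t_def)
  then have "x - t *\<^sub>R c k \<in> ball x r" by (simp add: dist_norm)
  then have "0 \<le> c k \<bullet> (x - t *\<^sub>R c k) + d k"
    using r(2) assms(2) by (force simp: polyhedron_of_def)
  also have "\<dots> = - t * (c k \<bullet> c k)" using x0 by (simp add: algebra_simps)
  also have "\<dots> < 0" using t(1) assms(3) by simp
  finally show False by simp
qed

text \<open>The witness for the \<open>k\<close>-th inequality is the point where the segment from an interior
  point to a point violating only that inequality leaves the polyhedron.\<close>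
lemma facet_defining_if_irredundant:
  assumes "finite K" "interior (polyhedron_of K c d) \<noteq> {}"
    and irr: "\<forall>k\<in>K. polyhedron_of (K - {k}) c d \<noteq> polyhedron_of K c d"
  shows "facet_defining K c d"
proof -
  obtain p where p: "p \<in> interior (polyhedron_of K c d)" using assms(2) by blast
  have nz: "c k \<noteq> 0" if "k \<in> K" for k
  proof
    assume ck: "c k = 0"
    have "0 \<le> c k \<bullet> p + d k" using p interior_subset that by (force simp: polyhedron_of_def)
    then have "polyhedron_of (K - {k}) c d = polyhedron_of K c d"
      using ck that by (auto simp: polyhedron_of_def)
    with irr that show False by blast
  qed
  have ppos: "\<forall>k\<in>K. 0 < c k \<bullet> p + d k" using slack_pos_at_interior_point[OF p] nz by blast
  have "\<exists>w. c k \<bullet> w + d k = 0 \<and> (\<forall>l\<in>K. l \<noteq> k \<longrightarrow> 0 < c l \<bullet> w + d l)" if k: "k \<in> K" for k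
  proof -
    have "polyhedron_of K c d \<subseteq> polyhedron_of (K - {k}) c d" by (auto simp: polyhedron_of_def)
    then obtain x where x: "x \<in> polyhedron_of (K - {k}) c d" "x \<notin> polyhedron_of K c d"
      using irr k by blast
    define s r where "s = c k \<bullet> p + d k" and "r = c k \<bullet> x + d k"
    have s: "s > 0" using ppos k by (simp add: s_def)
    obtain l where "l \<in> K" "c l \<bullet> x + d l < 0"
      using x(2) by (auto simp: polyhedron_of_def not_le)
    moreover from this x(1) have "l = k" by (force simp: polyhedron_of_def)
    ultimately have r: "r < 0" by (simp add: r_def)
    define t where "t = s / (s - r)"
    have t: "0 < t" "t < 1" using s r by (auto simp: t_def field_simps)
    define w where "w = (1 - t) *\<^sub>R p + t *\<^sub>R x"
    have "c k \<bullet> w + d k = (1 - t) * s + t * r"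
      by (simp add: w_def inner_affine_combination s_def r_def)
    also have "\<dots> = 0" using s r by (simp add: t_def field_simps)
    finally have "c k \<bullet> w + d k = 0" .
    moreover have "0 < c l \<bullet> w + d l" if "l \<in> K" "l \<noteq> k" for l
    proof -
      have "0 < (1 - t) * (c l \<bullet> p + d l)" using t ppos that by simp
      moreover have "0 \<le> t * (c l \<bullet> x + d l)" using t x that by (simp add: polyhedron_of_def)
      ultimately show ?thesis by (simp add: w_def inner_affine_combination)
    qed
    ultimately show ?thesis by blast
  qed
  with ppos show ?thesis by (auto simp: facet_defining_def)
qed

lemma common_zeros_face_of:
  assumes "S \<subseteq> K"
  shows "polyhedron_of K c d \<inter> {x. \<forall>k\<in>S. c k \<bullet> x + d k = 0} face_of polyhedron_of K c d"
proof (cases "S = {}")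
  case True
  then show ?thesis by (simp add: face_of_refl convex_polyhedron_of)
next
  case False
  then have "polyhedron_of K c d \<inter> {x. \<forall>k\<in>S. c k \<bullet> x + d k = 0} = \<Inter> (constraint_face K c d ` S)"
    by (auto simp: constraint_face_def)
  also have "\<dots> face_of polyhedron_of K c d"
    using False assms by (intro face_of_Inter) (auto intro: constraint_face_face_of)
  finally show ?thesis .
qed

lemma vertex_with_active_superset:
  assumes "S \<subseteq> K" "compact (polyhedron_of K c d)"
    and "x \<in> polyhedron_of K c d" "\<forall>k\<in>S. c k \<bullet> x + d k = 0"
  obtains v where "v extreme_point_of polyhedron_of K c d" "S \<subseteq> active K c d v"
proof -
  let ?F = "polyhedron_of K c d \<inter> {x. \<forall>k\<in>S. c k \<bullet> x + d k = 0}"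
  have F: "?F face_of polyhedron_of K c d" using assms(1) by (rule common_zeros_face_of)
  moreover have "compact ?F" using face_of_imp_compact[OF convex_polyhedron_of assms(2) F] .
  moreover have "?F \<noteq> {}" using assms(3,4) by blast
  ultimately obtain v where "v extreme_point_of ?F"
    using extreme_point_exists_convex face_of_imp_convex by blast
  then have "v extreme_point_of polyhedron_of K c d" "v \<in> ?F"
    using extreme_point_of_face[OF F] by auto
  with assms(1) that show thesis by (auto simp: active_def)
qed

lemma uniform_slack_if_no_common_zero:
  assumes "finite S" "S \<subseteq> K" "compact (polyhedron_of K c d)"
    and "\<not> (\<exists>x\<in>polyhedron_of K c d. \<forall>k\<in>S. c k \<bullet> x + d k = 0)"
  obtains \<delta> where "\<delta> > 0" "\<forall>x\<in>polyhedron_of K c d. \<exists>k\<in>S. \<delta> \<le> c k \<bullet> x + d k"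
proof (cases "polyhedron_of K c d = {}")
  case True
  then show thesis using that[of 1] by simp
next
  case False
  let ?f = "\<lambda>x. \<Sum>k\<in>S. c k \<bullet> x + d k"
  have nonneg: "0 \<le> c k \<bullet> x + d k" if "x \<in> polyhedron_of K c d" "k \<in> S" for x k
    using that assms(2) by (auto simp: polyhedron_of_def)
  have "continuous_on (polyhedron_of K c d) ?f" by (intro continuous_intros)
  then obtain x0 where x0: "x0 \<in> polyhedron_of K c d" "\<forall>x\<in>polyhedron_of K c d. ?f x0 \<le> ?f x"
    using continuous_attains_inf[OF assms(3) False] by blast
  have "?f x0 \<noteq> 0"
  proof
    assume "?f x0 = 0"
    moreover have "?f x0 = 0 \<longleftrightarrow> (\<forall>k\<in>S. c k \<bullet> x0 + d k = 0)"
      using nonneg[OF x0(1)] by (intro sum_nonneg_eq_0_iff[OF assms(1)])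
    ultimately have "\<forall>k\<in>S. c k \<bullet> x0 + d k = 0" by simp
    with assms(4) x0(1) show False by blast
  qed
  moreover have "0 \<le> ?f x0" using nonneg[OF x0(1)] by (intro sum_nonneg) auto
  ultimately have pos: "0 < ?f x0" by simp
  have "S \<noteq> {}" using x0(1) assms(4) by auto
  then have cS: "card S > 0" using assms(1) by (simp add: card_gt_0_iff)
  have "\<exists>k\<in>S. ?f x0 / card S \<le> c k \<bullet> x + d k" if x: "x \<in> polyhedron_of K c d" for x
  proof (rule ccontr)
    assume "\<not> ?thesis"
    then have "?f x < of_nat (card S) * (?f x0 / card S)"
      using cS by (intro sum_bounded_above_strict) (auto simp: not_le)
    also have "\<dots> = ?f x0" using cS by simp
    finally have "?f x < ?f x0" .
    moreover have "?f x0 \<le> ?f x" using x0(2) x by blast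
    ultimately show False by simp
  qed
  with pos cS show thesis using that[of "?f x0 / card S"] by simp
qed

text \<open>A set of inequalities with a common zero on the polytope is active at a vertex of the face
  it cuts out; any other set is bounded away from zero simultaneously, by compactness.\<close>
lemma eventually_nearly_active_subset_active_vertex:
  assumes "finite K" "compact (polyhedron_of K c d)"
  shows "eventually (\<lambda>e. \<forall>x\<in>polyhedron_of K c d. \<exists>v. v extreme_point_of polyhedron_of K c d \<and>
      {k\<in>K. c k \<bullet> x + d k \<le> e} \<subseteq> active K c d v) (at_right 0)"
proof -
  let ?Q = "polyhedron_of K c d"
  have "eventually (\<lambda>e. \<forall>x\<in>?Q. (\<forall>k\<in>S. c k \<bullet> x + d k \<le> e) \<longrightarrow>
      (\<exists>v. v extreme_point_of ?Q \<and> S \<subseteq> active K c d v)) (at_right 0)" if S: "S \<subseteq> K" for S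
  proof (cases "\<exists>x\<in>?Q. \<forall>k\<in>S. c k \<bullet> x + d k = 0")
    case True
    then obtain v where "v extreme_point_of ?Q" "S \<subseteq> active K c d v"
      using vertex_with_active_superset[OF S assms(2)] by blast
    then show ?thesis by (intro always_eventually) blast
  next
    case False
    obtain \<delta> where \<delta>: "\<delta> > 0" "\<forall>x\<in>?Q. \<exists>k\<in>S. \<delta> \<le> c k \<bullet> x + d k"
      using uniform_slack_if_no_common_zero[OF finite_subset[OF S assms(1)] S assms(2) False] .
    have "eventually (\<lambda>e. e < \<delta>) (at_right 0)"
      using eventually_at_right_0_mult_less[OF \<delta>(1), of 1] by simp
    then show ?thesis
    proof (rule eventually_mono)
      fix e assume "e < \<delta>"
      have "\<not> (\<forall>k\<in>S. c k \<bullet> x + d k \<le> e)" if "x \<in> ?Q" for x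
        using \<delta>(2) that \<open>e < \<delta>\<close> by fastforce
      then show "\<forall>x\<in>?Q. (\<forall>k\<in>S. c k \<bullet> x + d k \<le> e) \<longrightarrow>
          (\<exists>v. v extreme_point_of ?Q \<and> S \<subseteq> active K c d v)" by blast
    qed
  qed
  then have "eventually (\<lambda>e. \<forall>S\<in>Pow K. \<forall>x\<in>?Q. (\<forall>k\<in>S. c k \<bullet> x + d k \<le> e) \<longrightarrow>
      (\<exists>v. v extreme_point_of ?Q \<and> S \<subseteq> active K c d v)) (at_right 0)"
    using assms(1) by (intro eventually_ball_finite) auto
  then show ?thesis
  proof (rule eventually_mono)
    fix e assume H: "\<forall>S\<in>Pow K. \<forall>x\<in>?Q. (\<forall>k\<in>S. c k \<bullet> x + d k \<le> e) \<longrightarrow>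
      (\<exists>v. v extreme_point_of ?Q \<and> S \<subseteq> active K c d v)"
    show "\<forall>x\<in>?Q. \<exists>v. v extreme_point_of ?Q \<and> {k\<in>K. c k \<bullet> x + d k \<le> e} \<subseteq> active K c d v"
      using H[rule_format, of "{k\<in>K. c k \<bullet> x + d k \<le> e}" for x] by auto
  qed
qed

section \<open>Counting active constraints on a triangle\<close>

lemma card_Collect_insert:
  assumes "finite A" "a \<notin> A"
  shows "card {k\<in>insert a A. P k} = of_bool (P a) + card {k\<in>A. P k}"
proof (cases "P a")
  case True
  then have "{k\<in>insert a A. P k} = insert a {k\<in>A. P k}" by auto
  then show ?thesis using assms True by simp
next
  case False
  then have "{k\<in>insert a A. P k} = {k\<in>A. P k}" by auto
  then show ?thesis using False by simp
qed

lemma card_Collect_triple: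
  assumes "x \<noteq> y" "x \<noteq> z" "y \<noteq> z"
  shows "card {k\<in>{x,y,z}. P k} = of_bool (P x) + of_bool (P y) + of_bool (P z)"
proof -
  have "card {k\<in>{x,y,z}. P k} = of_bool (P x) + card {k\<in>{y,z}. P k}"
    by (rule card_Collect_insert) (use assms in auto)
  also have "card {k\<in>{y,z}. P k} = of_bool (P y) + card {k\<in>{z}. P k}"
    by (rule card_Collect_insert) (use assms in auto)
  also have "card {k\<in>{z}. P k} = of_bool (P z)"
    using card_Collect_insert[of "{}" z P] by simp
  finally show ?thesis by simp
qed

lemma card_eq_3_sorted:
  fixes S :: "'a::linorder set"
  assumes "finite S" "card S = 3"
  obtains x y z where "x < y" "y < z" "S = {x, y, z}"
proof -
  define xs where "xs = sorted_list_of_set S"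
  have xs: "set xs = S" "sorted_wrt (<) xs" "length xs = 3"
    using assms by (auto simp: xs_def)
  then obtain x y z where "xs = [x, y, z]"
    by (auto simp: numeral_3_eq_3 length_Suc_conv)
  with xs that show thesis by auto
qed

lemma card_edges_within_triple:
  fixes x y z :: "'a::linorder"
  assumes "x < y" "y < z" "\<forall>(i,j)\<in>G. i < j"
  shows "card {(i,j)\<in>G. i \<in> {x,y,z} \<and> j \<in> {x,y,z} \<and> Q i j}
    = of_bool ((x,y) \<in> G \<and> Q x y) + of_bool ((x,z) \<in> G \<and> Q x z) + of_bool ((y,z) \<in> G \<and> Q y z)"
proof -
  have "i < j" if "(i,j) \<in> G" for i j using assms(3) that by blast
  then have "{(i,j)\<in>G. i \<in> {x,y,z} \<and> j \<in> {x,y,z} \<and> Q i j}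
      = {g\<in>{(x,y), (x,z), (y,z)}. g \<in> G \<and> Q (fst g) (snd g)}"
    using assms(1,2) by (auto dest: order.strict_trans order.asym)
  also have "card \<dots> = of_bool ((x,y) \<in> G \<and> Q x y) + of_bool ((x,z) \<in> G \<and> Q x z)
      + of_bool ((y,z) \<in> G \<and> Q y z)"
    using assms(1,2) by (subst card_Collect_triple) auto
  finally show ?thesis .
qed

lemma triangle_count_le_3:
  fixes X Y Z e :: real
  assumes "0 \<le> X" "0 \<le> Y" "0 \<le> Z" "0 < e"
    and "gxy \<longrightarrow> e \<le> X + Y" "gxz \<longrightarrow> e \<le> X + Z" "gyz \<longrightarrow> e \<le> Y + Z"
    and "of_bool gxy + of_bool gxz + of_bool gyz \<noteq> (2::nat)"
  shows "of_bool (X = 0) + of_bool (Y = 0) + of_bool (Z = 0) + of_bool (gxy \<and> X + Y = e)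
    + of_bool (gxz \<and> X + Z = e) + of_bool (gyz \<and> Y + Z = e) \<le> (3::nat)"
  using assms by (cases gxy; cases gxz; cases gyz) (auto split: if_splits)

text \<open>Two edges are the exception: on a path \<open>i - c - j\<close>, \<open>Y c = e\<close> and \<open>Y i = Y j = 0\<close>
  give four.\<close>
lemma card_zeros_add_card_tight_edges_le_3:
  fixes Y :: "'a::linorder \<Rightarrow> real"
  assumes "finite S" "card S = 3" "\<forall>(i,j)\<in>G. i < j"
    and "card {(i,j)\<in>G. i \<in> S \<and> j \<in> S} \<noteq> 2"
    and "\<forall>i\<in>S. 0 \<le> Y i" "e > 0" "\<forall>(i,j)\<in>G. i \<in> S \<longrightarrow> j \<in> S \<longrightarrow> e \<le> Y i + Y j"
  shows "card {k\<in>S. Y k = 0} + card {(i,j)\<in>G. i \<in> S \<and> j \<in> S \<and> Y i + Y j = e} \<le> 3"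
proof -
  obtain x y z where xyz: "x < y" "y < z" "S = {x, y, z}"
    using card_eq_3_sorted[OF assms(1,2)] .
  note edges = card_edges_within_triple[OF xyz(1,2) assms(3)]
  have zeros: "card {k\<in>{x,y,z}. Y k = 0} = of_bool (Y x = 0) + of_bool (Y y = 0) + of_bool (Y z = 0)"
    using xyz(1,2) by (intro card_Collect_triple) auto
  have two: "of_bool ((x,y) \<in> G) + of_bool ((x,z) \<in> G) + of_bool ((y,z) \<in> G) \<noteq> (2::nat)"
    using assms(4) edges[of "\<lambda>_ _. True"] xyz(3) by simp
  show ?thesis
    unfolding xyz(3) unfolding zeros edges add.assoc[symmetric]
  proof (rule triangle_count_le_3[OF _ _ _ assms(6) _ _ _ two])
    show "0 \<le> Y x" "0 \<le> Y y" "0 \<le> Y z" using assms(5) xyz(3) by simp_all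
    show "(x,y) \<in> G \<longrightarrow> e \<le> Y x + Y y" "(x,z) \<in> G \<longrightarrow> e \<le> Y x + Y z"
      "(y,z) \<in> G \<longrightarrow> e \<le> Y y + Y z"
      using assms(7) xyz(3) by blast+
  qed
qed

lemma two_edges_within_triple_share_vertex:
  fixes S :: "'a::linorder set"
  assumes "finite S" "card S = 3" "\<forall>(i,j)\<in>G. i < j"
    and "card {(i,j)\<in>G. i \<in> S \<and> j \<in> S} = 2"
  obtains c where "c \<in> S" "\<forall>(i,j)\<in>G. i \<in> S \<longrightarrow> j \<in> S \<longrightarrow> i = c \<or> j = c"
proof -
  obtain x y z where xyz: "x < y" "y < z" "S = {x, y, z}"
    using card_eq_3_sorted[OF assms(1,2)] .
  have "card {(i,j)\<in>G. i \<in> S \<and> j \<in> S}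
      = of_bool ((x,y) \<in> G) + of_bool ((x,z) \<in> G) + of_bool ((y,z) \<in> G)"
    using card_edges_within_triple[OF xyz(1,2) assms(3), of "\<lambda>_ _. True"] xyz(3) by simp
  then have "(y,z) \<notin> G \<or> (x,z) \<notin> G \<or> (x,y) \<notin> G" using assms(4) by auto
  then show thesis
  proof (elim disjE)
    assume "(y,z) \<notin> G"
    then show thesis using xyz assms(3) by (intro that[of x]) auto
  next
    assume "(x,z) \<notin> G"
    then show thesis using xyz assms(3) by (intro that[of y]) auto
  next
    assume "(x,y) \<notin> G"
    then show thesis using xyz assms(3) by (intro that[of z]) auto
  qed
qed

section \<open>Graph-truncation of a simple 3-polytope\<close>

locale graph_truncation =
  fixes m :: nat and a :: "nat \<Rightarrow> real^3" and b :: "nat \<Rightarrow> real"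
    and P :: "(real^3) set" and \<Gamma> :: "(nat \<times> nat) set"
  assumes P_def: "P = ineq_poly m a b"
    and polytope_P: "polytope P" and aff_dim_P: "aff_dim P = 3"
    and irredundant_P: "irredundant m a b"
    and simple_P: "simple_polytope P"
    and \<Gamma>_edges: "\<forall>(i,j)\<in>\<Gamma>. i < j \<and> j < m \<and>
                     (facet_set a b P i \<inter> facet_set a b P j) edge_of P"
begin

abbreviation y :: "nat \<Rightarrow> real^3 \<Rightarrow> real" where "y k x \<equiv> a k \<bullet> x + b k"

abbreviation T :: "real^3 \<Rightarrow> nat set" where "T \<equiv> active {..<m} a b"

lemma P_eq: "P = polyhedron_of {..<m} a b"
  by (auto simp: P_def ineq_poly_def polyhedron_of_def)

lemma mem_P: "x \<in> P \<longleftrightarrow> (\<forall>k<m. 0 \<le> y k x)"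
  by (auto simp: P_eq polyhedron_of_def)

lemma mem_T: "k \<in> T x \<longleftrightarrow> k < m \<and> y k x = 0"
  by (simp add: active_def)

lemma compact_P: "compact P"
  using polytope_P polytope_imp_compact by blast

lemma \<Gamma>_bounds:
  assumes "(i,j) \<in> \<Gamma>"
  shows "i < j" "i < m" "j < m"
  using \<Gamma>_edges assms by auto

lemma finite_\<Gamma>: "finite \<Gamma>"
proof -
  have "\<Gamma> \<subseteq> {..<m} \<times> {..<m}" using \<Gamma>_bounds by auto
  then show ?thesis by (rule finite_subset) auto
qed

lemma facet_defining_P: "facet_defining {..<m} a b"
proof (rule facet_defining_if_irredundant)
  have "P \<noteq> {}" using aff_dim_P by auto
  then have "rel_interior P \<noteq> {}" using convex_polyhedron_of P_eq rel_interior_eq_empty by metis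
  moreover have "rel_interior P = interior P"
    using aff_dim_P aff_dim_eq_full[of P] rel_interior_interior by simp
  ultimately show "interior (polyhedron_of {..<m} a b) \<noteq> {}" using P_eq by simp
  show "\<forall>k\<in>{..<m}. polyhedron_of ({..<m} - {k}) a b \<noteq> polyhedron_of {..<m} a b"
  proof
    fix k assume "k \<in> {..<m}"
    moreover have "polyhedron_of ({..<m} - {k}) a b = {x. \<forall>i<m. i \<noteq> k \<longrightarrow> 0 \<le> y i x}"
      by (auto simp: polyhedron_of_def)
    ultimately show "polyhedron_of ({..<m} - {k}) a b \<noteq> polyhedron_of {..<m} a b"
      using irredundant_P P_def P_eq by (simp add: irredundant_def)
  qed
qed simp

lemma interior_point_P:
  obtains p where "\<forall>k<m. 0 < y k p"
  using facet_defining_P unfolding facet_defining_def by auto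

lemma facet_witness_P:
  assumes "k < m"
  obtains w where "y k w = 0" "\<forall>l<m. l \<noteq> k \<longrightarrow> 0 < y l w"
proof -
  have "\<exists>w. y k w = 0 \<and> (\<forall>l\<in>{..<m}. l \<noteq> k \<longrightarrow> 0 < y l w)"
    using facet_defining_P assms unfolding facet_defining_def by blast
  with that show thesis by auto
qed

lemma card_T_vertex:
  assumes "v extreme_point_of P"
  shows "card (T v) = 3"
proof -
  have "bounded (polyhedron_of {..<m} a b)" using compact_P compact_imp_bounded P_eq by auto
  then show ?thesis
    using simple_polytope_polyhedron_of_iff[OF finite_lessThan facet_defining_P] simple_P assms P_eq
    by simp
qed

lemma span_T_vertex: "v extreme_point_of P \<Longrightarrow> span (a ` T v) = UNIV"
  using span_active_if_extreme_point[of "{..<m}" v a b] by (simp add: P_eq)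

lemma valency_eq_card_edges_within:
  assumes "v \<in> P"
  shows "valency a b P \<Gamma> v = card {(i,j)\<in>\<Gamma>. i \<in> T v \<and> j \<in> T v}"
proof -
  have "{(i,j)\<in>\<Gamma>. v \<in> facet_set a b P i \<inter> facet_set a b P j} = {(i,j)\<in>\<Gamma>. i \<in> T v \<and> j \<in> T v}"
    using assms \<Gamma>_bounds by (auto simp: facet_set_def active_def)
  then show ?thesis by (simp add: valency_def)
qed

text \<open>If a third inequality \<open>l\<close> were active at a relative interior point of the edge, the
  whole edge would lie in the facet of \<open>l\<close>; at a vertex of the edge the active set is then
  \<open>{i, j, l}\<close>, whose normals span, so the edge would be a single point.\<close>
lemma edge_relative_interior_point:
  assumes "(i,j) \<in> \<Gamma>"
  obtains q where "q \<in> P" "T q = {i, j}"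
proof -
  define E where "E = facet_set a b P i \<inter> facet_set a b P j"
  note ij = \<Gamma>_bounds[OF assms]
  have E: "E face_of P" "aff_dim E = 1" using \<Gamma>_edges assms by (auto simp: E_def edge_of_def)
  have E_eq: "E = P \<inter> {x. y i x = 0 \<and> y j x = 0}" by (auto simp: E_def facet_set_def)
  have "E \<noteq> {}" using E(2) by auto
  moreover have "convex E" using E(1) face_of_imp_convex by blast
  ultimately obtain q where q: "q \<in> rel_interior E" using rel_interior_eq_empty by blast
  then have qE: "q \<in> E" using rel_interior_subset by blast
  have "l \<notin> T q" if l: "l \<noteq> i" "l \<noteq> j" for l
  proof
    assume lq: "l \<in> T q"
    have Fl: "constraint_face {..<m} a b l face_of P"
      using lq constraint_face_face_of[of l "{..<m}" a b] by (simp add: P_eq mem_T)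
    have "q \<in> constraint_face {..<m} a b l" using qE lq E_eq by (simp add: constraint_face_def P_eq mem_T)
    then have El: "E \<subseteq> constraint_face {..<m} a b l"
      using subset_of_face_of[OF Fl face_of_imp_subset[OF E(1)]] q by blast
    have "compact E" using face_of_imp_compact[OF convex_polyhedron_of compact_P[unfolded P_eq]] E(1) P_eq
      by simp
    then obtain v where "v extreme_point_of E"
      using extreme_point_exists_convex \<open>convex E\<close> \<open>E \<noteq> {}\<close> by blast
    then have v: "v extreme_point_of P" "v \<in> E" using extreme_point_of_face[OF E(1)] by auto
    have zero_on_E: "k \<in> {i, j, l} \<Longrightarrow> x \<in> E \<Longrightarrow> y k x = 0" for k x
      using El E_eq by (auto simp: constraint_face_def)
    have "{i, j, l} \<subseteq> T v" using zero_on_E[OF _ v(2)] ij lq by (auto simp: mem_T)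
    moreover have "card {i, j, l} = 3" using ij l by auto
    ultimately have Tv: "T v = {i, j, l}"
      using card_subset_eq[OF finite_active] card_T_vertex[OF v(1)] by (metis finite_lessThan)
    have "x = v" if x: "x \<in> E" for x
    proof -
      have "a k \<bullet> (x - v) = 0" if "k \<in> T v" for k
      proof -
        from that have k: "k \<in> {i, j, l}" by (simp add: Tv)
        have "a k \<bullet> x = a k \<bullet> v" using zero_on_E[OF k x] zero_on_E[OF k v(2)] by linarith
        then show ?thesis by (simp add: inner_diff_right)
      qed
      then have "x - v = 0" using eq_0_if_orthogonal_spanning[OF span_T_vertex[OF v(1)]] by blast
      then show ?thesis by simp
    qed
    then have "E = {v}" using v(2) by blast
    then show False using E(2) by simp
  qed
  moreover have "{i, j} \<subseteq> T q" using qE E_eq ij by (auto simp: mem_T)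
  ultimately have "T q = {i, j}" by blast
  with qE E_eq that show thesis by blast
qed

text \<open>\<open>Inl k\<close> indexes the inequality of the facet \<open>F\<^sub>k\<close> of \<open>P\<close>, \<open>Inr (i, j)\<close> the new
  inequality \<open>y\<^sub>i + y\<^sub>j \<ge> e\<close> of the edge \<open>F\<^sub>i \<inter> F\<^sub>j\<close>.\<close>
definition trunc_index :: "(nat + nat \<times> nat) set" where
  "trunc_index = Inl ` {..<m} \<union> Inr ` \<Gamma>"

definition trunc_normal :: "nat + nat \<times> nat \<Rightarrow> real^3" where
  "trunc_normal = case_sum a (\<lambda>(i,j). a i + a j)"

definition trunc_offset :: "real \<Rightarrow> nat + nat \<times> nat \<Rightarrow> real" where
  "trunc_offset e = case_sum b (\<lambda>(i,j). b i + b j - e)"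

abbreviation Q :: "real \<Rightarrow> (real^3) set" where
  "Q e \<equiv> polyhedron_of trunc_index trunc_normal (trunc_offset e)"

abbreviation TQ :: "real \<Rightarrow> real^3 \<Rightarrow> (nat + nat \<times> nat) set" where
  "TQ e \<equiv> active trunc_index trunc_normal (trunc_offset e)"

lemma trunc_slack [simp]:
  "trunc_normal (Inl k) \<bullet> x + trunc_offset e (Inl k) = y k x"
  "trunc_normal (Inr (i,j)) \<bullet> x + trunc_offset e (Inr (i,j)) = y i x + y j x - e"
  by (simp_all add: trunc_normal_def trunc_offset_def inner_add_left)

lemma finite_trunc_index: "finite trunc_index"
  using finite_\<Gamma> by (simp add: trunc_index_def)

lemma ball_trunc_index: "(\<forall>k\<in>trunc_index. R k) \<longleftrightarrow> (\<forall>k<m. R (Inl k)) \<and> (\<forall>(i,j)\<in>\<Gamma>. R (Inr (i,j)))"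
  by (auto simp: trunc_index_def)

lemma mem_Q: "x \<in> Q e \<longleftrightarrow> x \<in> P \<and> (\<forall>(i,j)\<in>\<Gamma>. e \<le> y i x + y j x)"
  by (auto simp: polyhedron_of_def ball_trunc_index mem_P)

lemma graph_trunc_eq: "graph_trunc a b P \<Gamma> e = Q e"
  unfolding graph_trunc_def by (auto simp: mem_Q algebra_simps)

lemma bounded_Q: "bounded (Q e)"
  using compact_P compact_imp_bounded bounded_subset mem_Q by blast

lemma TQ_eq: "TQ e x = Inl ` T x \<union> Inr ` {(i,j)\<in>\<Gamma>. y i x + y j x = e}"
  by (auto simp: active_def trunc_index_def)

lemma card_TQ: "card (TQ e x) = card (T x) + card {(i,j)\<in>\<Gamma>. y i x + y j x = e}"
proof -
  have "finite {(i,j)\<in>\<Gamma>. y i x + y j x = e}" using finite_\<Gamma> by (rule rev_finite_subset) auto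
  then show ?thesis
    unfolding TQ_eq by (subst card_Un_disjoint) (auto simp: card_image finite_active)
qed

lemma eventually_Q_interior_point:
  "eventually (\<lambda>e. \<exists>p. \<forall>k\<in>trunc_index. 0 < trunc_normal k \<bullet> p + trunc_offset e k) (at_right 0)"
proof -
  obtain p where p: "\<forall>k<m. 0 < y k p" using interior_point_P .
  have "\<forall>(i,j)\<in>\<Gamma>. eventually (\<lambda>e. e < y i p + y j p) (at_right 0)"
  proof clarify
    fix i j assume "(i,j) \<in> \<Gamma>"
    then have "0 < y i p" "0 < y j p" using p \<Gamma>_bounds by auto
    then have "0 < y i p + y j p" by (rule add_pos_pos)
    then show "eventually (\<lambda>e. e < y i p + y j p) (at_right 0)"
      by (rule eventually_at_right_0_less)
  qed
  then have "eventually (\<lambda>e. \<forall>(i,j)\<in>\<Gamma>. e < y i p + y j p) (at_right 0)"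
    using finite_\<Gamma> by (intro eventually_ball_finite) auto
  then show ?thesis
    by (rule eventually_mono) (use p in \<open>auto simp: ball_trunc_index\<close>)
qed

lemma eventually_Q_witness_Inl:
  assumes "k < m"
  shows "eventually (\<lambda>e. \<exists>w. trunc_normal (Inl k) \<bullet> w + trunc_offset e (Inl k) = 0 \<and>
    (\<forall>l\<in>trunc_index. l \<noteq> Inl k \<longrightarrow> 0 < trunc_normal l \<bullet> w + trunc_offset e l)) (at_right 0)"
proof -
  obtain w where w: "y k w = 0" "\<forall>l<m. l \<noteq> k \<longrightarrow> 0 < y l w"
    using facet_witness_P[OF assms] .
  have "0 \<le> y l w" if "l < m" for l using w that by (cases "l = k") auto
  then have "0 < y i w + y j w" if "(i,j) \<in> \<Gamma>" for i j
    using w \<Gamma>_bounds[OF that] by (cases "i = k") (auto intro: add_nonneg_pos add_pos_nonneg)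
  then have "eventually (\<lambda>e. \<forall>(i,j)\<in>\<Gamma>. e < y i w + y j w) (at_right 0)"
    using finite_\<Gamma> by (intro eventually_ball_finite) (auto intro: eventually_at_right_0_less)
  then show ?thesis
    by (rule eventually_mono) (use w in \<open>auto simp: ball_trunc_index\<close>)
qed

text \<open>The witness for the new facet of the edge \<open>(i, j)\<close> lies on the segment from a relative
  interior point \<open>q\<close> of the edge to an interior point \<open>p\<close>, at parameter
  \<open>e / (y\<^sub>i p + y\<^sub>j p)\<close>.\<close>
lemma eventually_Q_witness_Inr:
  assumes ij: "(i,j) \<in> \<Gamma>"
  shows "eventually (\<lambda>e. \<exists>z. trunc_normal (Inr (i,j)) \<bullet> z + trunc_offset e (Inr (i,j)) = 0 \<and>
    (\<forall>l\<in>trunc_index. l \<noteq> Inr (i,j) \<longrightarrow> 0 < trunc_normal l \<bullet> z + trunc_offset e l)) (at_right 0)"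
proof -
  obtain p where p: "\<forall>k<m. 0 < y k p" using interior_point_P .
  obtain q where q: "q \<in> P" "T q = {i, j}" using edge_relative_interior_point[OF ij] .
  have yq0: "y i q = 0" "y j q = 0" using q(2) by (auto simp: set_eq_iff mem_T)
  have yq: "0 < y l q" if "l < m" "l \<noteq> i" "l \<noteq> j" for l
    using q that by (auto simp: mem_P mem_T set_eq_iff le_less)
  define s where "s = y i p + y j p"
  have s: "0 < s" using p \<Gamma>_bounds[OF ij] by (simp add: s_def add_pos_pos)
  have "\<forall>l\<in>{..<m} - {i, j}. eventually (\<lambda>e. e * (1 + y l q / s) < y l q) (at_right 0)"
    using yq by (auto intro: eventually_at_right_0_mult_less)
  then have "eventually (\<lambda>e. \<forall>l\<in>{..<m} - {i, j}. e * (1 + y l q / s) < y l q) (at_right 0)"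
    by (intro eventually_ball_finite) auto
  moreover have "eventually (\<lambda>e. 0 < e \<and> e < s) (at_right 0)"
    using s by (intro eventually_conj eventually_at_right_less eventually_at_right_0_less)
  ultimately show ?thesis
  proof (rule eventually_elim2)
    fix e assume far: "\<forall>l\<in>{..<m} - {i, j}. e * (1 + y l q / s) < y l q" and e: "0 < e \<and> e < s"
    define t where "t = e / s"
    have t: "0 < t" "t < 1" using e s by (simp_all add: t_def)
    define z where "z = (1 - t) *\<^sub>R q + t *\<^sub>R p"
    have yz: "y l z = (1 - t) * y l q + t * y l p" for l
      by (simp add: z_def inner_affine_combination)
    have "y i z + y j z = ((1 - t) * y i q + t * y i p) + ((1 - t) * y j q + t * y j p)"
      by (simp only: yz)
    also have "\<dots> = t * s" using yq0 by (simp add: s_def algebra_simps)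
    finally have "y i z + y j z = t * s" .
    then have tight: "y i z + y j z = e" using s by (simp add: t_def)
    have pos: "0 < y l z" if "l < m" for l
      using t p that yq0 yq[OF that] by (cases "l = i \<or> l = j") (auto simp: yz intro!: add_nonneg_pos)
    have big: "e < y l z" if "l < m" "l \<noteq> i" "l \<noteq> j" for l
    proof -
      have "e < (1 - t) * y l q" using far that s by (auto simp: t_def field_simps)
      moreover have "0 < t * y l p" using t p that by simp
      ultimately show ?thesis by (simp add: yz)
    qed
    have "e < y i' z + y j' z" if "(i',j') \<in> \<Gamma>" "(i',j') \<noteq> (i,j)" for i' j'
    proof -
      have "(i' \<noteq> i \<and> i' \<noteq> j) \<or> (j' \<noteq> i \<and> j' \<noteq> j)"
        using that \<Gamma>_bounds[OF that(1)] \<Gamma>_bounds[OF ij] by auto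
      then show ?thesis
        using big pos \<Gamma>_bounds[OF that(1)] by (fastforce intro: add_less_le_mono add_le_less_mono less_imp_le)
    qed
    with pos tight show "\<exists>z. trunc_normal (Inr (i,j)) \<bullet> z + trunc_offset e (Inr (i,j)) = 0 \<and>
        (\<forall>l\<in>trunc_index. l \<noteq> Inr (i,j) \<longrightarrow> 0 < trunc_normal l \<bullet> z + trunc_offset e l)"
      by (intro exI[of _ z]) (auto simp: ball_trunc_index)
  qed
qed

lemma eventually_facet_defining_Q:
  "eventually (\<lambda>e. facet_defining trunc_index trunc_normal (trunc_offset e)) (at_right 0)"
proof -
  have "\<forall>k\<in>trunc_index. eventually (\<lambda>e. \<exists>w. trunc_normal k \<bullet> w + trunc_offset e k = 0 \<and>
      (\<forall>l\<in>trunc_index. l \<noteq> k \<longrightarrow> 0 < trunc_normal l \<bullet> w + trunc_offset e l)) (at_right 0)"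
    using eventually_Q_witness_Inl eventually_Q_witness_Inr by (auto simp: trunc_index_def)
  then have "eventually (\<lambda>e. \<forall>k\<in>trunc_index. \<exists>w. trunc_normal k \<bullet> w + trunc_offset e k = 0 \<and>
      (\<forall>l\<in>trunc_index. l \<noteq> k \<longrightarrow> 0 < trunc_normal l \<bullet> w + trunc_offset e l)) (at_right 0)"
    using finite_trunc_index by (intro eventually_ball_finite)
  with eventually_Q_interior_point show ?thesis
    unfolding facet_defining_def by (rule eventually_conj)
qed

lemma card_TQ_le_3:
  assumes no_valency_2: "\<forall>v. v extreme_point_of P \<longrightarrow> valency a b P \<Gamma> v \<noteq> 2"
    and e: "0 < e" and u: "u \<in> Q e"
    and v: "v extreme_point_of P" "{k\<in>{..<m}. y k u \<le> e} \<subseteq> T v"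
  shows "card (TQ e u) \<le> 3"
proof -
  have uP: "u \<in> P" and cut: "\<forall>(i,j)\<in>\<Gamma>. e \<le> y i u + y j u" using u mem_Q by auto
  have nonneg: "0 \<le> y k u" if "k < m" for k using uP that mem_P by blast
  have zeros: "T u = {k\<in>T v. y k u = 0}" using v(2) e by (auto simp: mem_T)
  have tight_edges: "{(i,j)\<in>\<Gamma>. y i u + y j u = e} = {(i,j)\<in>\<Gamma>. i \<in> T v \<and> j \<in> T v \<and> y i u + y j u = e}"
  proof -
    have "i \<in> T v" "j \<in> T v" if "(i,j) \<in> \<Gamma>" "y i u + y j u = e" for i j
      using that v(2) nonneg[OF \<Gamma>_bounds(2)[OF that(1)]] nonneg[OF \<Gamma>_bounds(3)[OF that(1)]]
        \<Gamma>_bounds[OF that(1)] by auto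
    then show ?thesis by auto
  qed
  have valency: "card {(i,j)\<in>\<Gamma>. i \<in> T v \<and> j \<in> T v} \<noteq> 2"
  proof -
    have "v \<in> P" using v(1) by (simp add: extreme_point_of_def)
    then have "card {(i,j)\<in>\<Gamma>. i \<in> T v \<and> j \<in> T v} = valency a b P \<Gamma> v"
      by (simp add: valency_eq_card_edges_within)
    then show ?thesis using no_valency_2 v(1) by simp
  qed
  show ?thesis
    unfolding card_TQ zeros tight_edges
  proof (rule card_zeros_add_card_tight_edges_le_3[OF finite_active card_T_vertex[OF v(1)] _ valency])
    show "\<forall>(i,j)\<in>\<Gamma>. i < j" using \<Gamma>_bounds(1) by blast
    show "\<forall>i\<in>T v. 0 \<le> y i u" using nonneg by (simp add: mem_T)
  qed (use e cut in auto)
qed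

lemma eventually_simple_if_no_valency_2:
  assumes "\<forall>v. v extreme_point_of P \<longrightarrow> valency a b P \<Gamma> v \<noteq> 2"
  shows "eventually (\<lambda>e. simple_polytope (graph_trunc a b P \<Gamma> e)) (at_right 0)"
proof -
  have "eventually (\<lambda>e. \<forall>x\<in>P. \<exists>v. v extreme_point_of P \<and> {k\<in>{..<m}. y k x \<le> e} \<subseteq> T v)
      (at_right 0)"
    using eventually_nearly_active_subset_active_vertex[of "{..<m}" a b, OF finite_lessThan] compact_P
    by (simp add: P_eq)
  then have "eventually (\<lambda>e. 0 < e \<and> facet_defining trunc_index trunc_normal (trunc_offset e) \<and>
      (\<forall>x\<in>P. \<exists>v. v extreme_point_of P \<and> {k\<in>{..<m}. y k x \<le> e} \<subseteq> T v)) (at_right 0)"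
    by (intro eventually_conj eventually_at_right_less eventually_facet_defining_Q)
  then show ?thesis
  proof (rule eventually_mono)
    fix e assume e: "0 < e \<and> facet_defining trunc_index trunc_normal (trunc_offset e) \<and>
      (\<forall>x\<in>P. \<exists>v. v extreme_point_of P \<and> {k\<in>{..<m}. y k x \<le> e} \<subseteq> T v)"
    have "card (TQ e u) = 3" if u: "u extreme_point_of Q e" for u
    proof (rule antisym)
      have "u \<in> Q e" using u extreme_point_of_def by blast
      then obtain v where "v extreme_point_of P" "{k\<in>{..<m}. y k u \<le> e} \<subseteq> T v"
        using e mem_Q by blast
      then show "card (TQ e u) \<le> 3" using card_TQ_le_3 assms e \<open>u \<in> Q e\<close> by blast
      show "3 \<le> card (TQ e u)" using DIM_le_card_active[OF finite_trunc_index u] by simp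
    qed
    then show "simple_polytope (graph_trunc a b P \<Gamma> e)"
      unfolding graph_trunc_eq
      using simple_polytope_polyhedron_of_iff[OF finite_trunc_index _ bounded_Q] e by simp
  qed
qed

text \<open>Moving from \<open>v\<close> by \<open>e\<close> along the edge of \<open>P\<close> that leaves the facet \<open>c\<close> makes the
  inequalities of both edges of \<open>\<Gamma>\<close> at \<open>c\<close> active, besides the two facets containing the edge.\<close>
lemma shifted_vertex_in_Q:
  assumes v: "v \<in> P"
    and c: "c \<in> T v" "\<forall>(i,j)\<in>\<Gamma>. i \<in> T v \<longrightarrow> j \<in> T v \<longrightarrow> i = c \<or> j = c"
    and d: "a c \<bullet> d = 1" "\<forall>k\<in>T v - {c}. a k \<bullet> d = 0"
    and e: "0 < e" "\<forall>l<m. l \<notin> T v \<longrightarrow> e * (\<bar>a l \<bullet> d\<bar> + 1) < y l v"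
  shows "v + e *\<^sub>R d \<in> Q e"
    and "Inl ` (T v - {c}) \<union> Inr ` {(i,j)\<in>\<Gamma>. i \<in> T v \<and> j \<in> T v} \<subseteq> TQ e (v + e *\<^sub>R d)"
proof -
  let ?u = "v + e *\<^sub>R d"
  have yu: "y k ?u = y k v + e * (a k \<bullet> d)" for k by (simp add: algebra_simps)
  have face: "y k ?u = 0" if "k \<in> T v - {c}" for k using that d(2) by (simp add: yu mem_T)
  have centre: "y c ?u = e" using c(1) d(1) by (simp add: yu mem_T)
  have far: "e < y l ?u" if "l < m" "l \<notin> T v" for l
  proof -
    have "e * \<bar>a l \<bullet> d\<bar> + e < y l v" using e(2) that by (simp add: algebra_simps)
    moreover have "e * (- \<bar>a l \<bullet> d\<bar>) \<le> e * (a l \<bullet> d)"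
      using e(1) by (intro mult_left_mono) auto
    ultimately show ?thesis using yu[of l] by simp
  qed
  have nonneg: "0 \<le> y k ?u" if "k < m" for k
    using face centre far[OF that] e(1) that by (cases "k \<in> T v"; cases "k = c") auto
  have edge: "y i ?u + y j ?u = e" if g: "(i,j) \<in> \<Gamma>" "i \<in> T v" "j \<in> T v" for i j
  proof -
    have "i \<noteq> j" using \<Gamma>_bounds(1)[OF g(1)] by simp
    then consider "i = c" "j \<in> T v - {c}" | "j = c" "i \<in> T v - {c}" using c(2) g by blast
    then show ?thesis using face centre by cases auto
  qed
  have "e \<le> y i ?u + y j ?u" if "(i,j) \<in> \<Gamma>" for i j
  proof (cases "i \<in> T v \<and> j \<in> T v")
    case True
    then show ?thesis using edge that by simp
  next
    case False
    then show ?thesis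
      using far nonneg \<Gamma>_bounds[OF that] by (fastforce intro: add_less_le_mono add_le_less_mono less_imp_le)
  qed
  then show "?u \<in> Q e" using nonneg by (auto simp: mem_Q mem_P)
  show "Inl ` (T v - {c}) \<union> Inr ` {(i,j)\<in>\<Gamma>. i \<in> T v \<and> j \<in> T v} \<subseteq> TQ e ?u"
    using face edge by (auto simp: TQ_eq mem_T)
qed

lemma span_trunc_normal_eq_UNIV:
  assumes v: "v extreme_point_of P" and c: "c \<in> T v"
    and ij: "(i,j) \<in> \<Gamma>" "i \<in> T v" "j \<in> T v" "i = c \<or> j = c"
    and A: "Inl ` (T v - {c}) \<union> {Inr (i,j)} \<subseteq> A"
  shows "span (trunc_normal ` A) = UNIV"
proof -
  have "a k \<in> span (trunc_normal ` A)" if "k \<in> T v" for k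
  proof (cases "k = c")
    case False
    then have "trunc_normal (Inl k) \<in> trunc_normal ` A" using A that by auto
    then show ?thesis by (auto simp: trunc_normal_def intro: span_base)
  next
    case True
    define r where "r = (if i = c then j else i)"
    have "r \<in> T v - {c}" using ij \<Gamma>_bounds(1)[OF ij(1)] by (auto simp: r_def)
    then have "trunc_normal (Inr (i,j)) - trunc_normal (Inl r) \<in> span (trunc_normal ` A)"
      using A by (intro span_diff span_base) auto
    moreover have "trunc_normal (Inr (i,j)) - trunc_normal (Inl r) = a k"
      using True ij(4) by (auto simp: trunc_normal_def r_def)
    ultimately show ?thesis by simp
  qed
  then have "span (a ` T v) \<subseteq> span (trunc_normal ` A)" by (simp add: image_subset_iff span_minimal)
  then show ?thesis using span_T_vertex[OF v] by auto
qed

lemma eventually_not_simple_if_valency_2: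
  assumes v: "v extreme_point_of P" and valency_2: "valency a b P \<Gamma> v = 2"
  shows "eventually (\<lambda>e. \<not> simple_polytope (graph_trunc a b P \<Gamma> e)) (at_right 0)"
proof -
  have vP: "v \<in> P" using v by (simp add: extreme_point_of_def)
  define G where "G = {(i,j)\<in>\<Gamma>. i \<in> T v \<and> j \<in> T v}"
  have G2: "card G = 2" using valency_2 valency_eq_card_edges_within[OF vP] by (simp add: G_def)
  have "finite G" using finite_\<Gamma> unfolding G_def by (rule rev_finite_subset) auto
  obtain c where c: "c \<in> T v" "\<forall>(i,j)\<in>\<Gamma>. i \<in> T v \<longrightarrow> j \<in> T v \<longrightarrow> i = c \<or> j = c"
    using two_edges_within_triple_share_vertex[OF finite_active card_T_vertex[OF v]] \<Gamma>_bounds(1) G2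
    unfolding G_def by blast
  obtain d where d: "a c \<bullet> d = 1" "\<forall>k\<in>T v - {c}. a k \<bullet> d = 0"
    using exists_dual_vector[OF span_T_vertex[OF v] finite_active _ c(1)] card_T_vertex[OF v] by auto
  obtain i j where ij: "(i,j) \<in> G"
    using G2 by (metis card.empty ex_in_conv prod.exhaust zero_neq_numeral)
  have "\<forall>l\<in>{..<m} - T v. eventually (\<lambda>e. e * (\<bar>a l \<bullet> d\<bar> + 1) < y l v) (at_right 0)"
    using vP by (auto intro!: eventually_at_right_0_mult_less simp: mem_P mem_T le_less)
  then have "eventually (\<lambda>e. \<forall>l\<in>{..<m} - T v. e * (\<bar>a l \<bullet> d\<bar> + 1) < y l v) (at_right 0)"
    by (intro eventually_ball_finite) auto
  then have "eventually (\<lambda>e. 0 < e \<and> facet_defining trunc_index trunc_normal (trunc_offset e) \<and>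
      (\<forall>l\<in>{..<m} - T v. e * (\<bar>a l \<bullet> d\<bar> + 1) < y l v)) (at_right 0)"
    by (intro eventually_conj eventually_at_right_less eventually_facet_defining_Q)
  then show ?thesis
  proof (rule eventually_mono)
    fix e assume e: "0 < e \<and> facet_defining trunc_index trunc_normal (trunc_offset e) \<and>
      (\<forall>l\<in>{..<m} - T v. e * (\<bar>a l \<bullet> d\<bar> + 1) < y l v)"
    let ?u = "v + e *\<^sub>R d"
    have u: "?u \<in> Q e" "Inl ` (T v - {c}) \<union> Inr ` G \<subseteq> TQ e ?u"
      using shifted_vertex_in_Q[OF vP c d] e unfolding G_def by auto
    have "span (trunc_normal ` TQ e ?u) = UNIV"
      using u(2) ij c by (intro span_trunc_normal_eq_UNIV[OF v c(1), of i j]) (auto simp: G_def)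
    then have u_vertex: "?u extreme_point_of Q e" by (rule extreme_point_if_span_active[OF u(1)])
    have "card (Inl ` (T v - {c}) \<union> Inr ` G) = 4"
      using G2 \<open>finite G\<close> card_T_vertex[OF v] c(1) finite_active[of "{..<m}" a b v]
      by (subst card_Un_disjoint) (auto simp: card_image)
    then have "4 \<le> card (TQ e ?u)"
      using u(2) card_mono[OF finite_active[OF finite_trunc_index]] by metis
    then show "\<not> simple_polytope (graph_trunc a b P \<Gamma> e)"
      unfolding graph_trunc_eq
      using simple_polytope_polyhedron_of_iff[OF finite_trunc_index _ bounded_Q] e u_vertex by force
  qed
qed

end

theorem proposition6:
  fixes m :: nat and a :: "nat \<Rightarrow> real^3" and b :: "nat \<Rightarrow> real"
    and P :: "(real^3) set" and \<Gamma> :: "(nat \<times> nat) set"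
  assumes P_def: "P = ineq_poly m a b"
    and "polytope P" and "aff_dim P = 3"
    and "irredundant m a b"
    and "simple_polytope P"
    and \<Gamma>_edges: "\<forall>(i,j)\<in>\<Gamma>. i < j \<and> j < m \<and>
                     (facet_set a b P i \<inter> facet_set a b P j) edge_of P"
  shows "(\<exists>\<epsilon>0>0. \<forall>\<epsilon>. 0 < \<epsilon> \<and> \<epsilon> < \<epsilon>0 \<longrightarrow> simple_polytope (graph_trunc a b P \<Gamma> \<epsilon>))
         \<longleftrightarrow> (\<forall>v. v extreme_point_of P \<longrightarrow> valency a b P \<Gamma> v \<noteq> 2)"
proof -
  interpret graph_truncation m a b P \<Gamma> using assms by unfold_locales
  show ?thesis
  proof
    assume "\<exists>\<epsilon>0>0. \<forall>\<epsilon>. 0 < \<epsilon> \<and> \<epsilon> < \<epsilon>0 \<longrightarrow> simple_polytope (graph_trunc a b P \<Gamma> \<epsilon>)"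
    then have simple: "eventually (\<lambda>e. simple_polytope (graph_trunc a b P \<Gamma> e)) (at_right 0)"
      by (auto simp: eventually_at_right_field)
    show "\<forall>v. v extreme_point_of P \<longrightarrow> valency a b P \<Gamma> v \<noteq> 2"
    proof (intro allI impI notI)
      fix v assume "v extreme_point_of P" "valency a b P \<Gamma> v = 2"
      from eventually_conj[OF simple eventually_not_simple_if_valency_2[OF this]]
      show False using eventually_happens'[OF trivial_limit_at_right_real] by blast
    qed
  next
    assume "\<forall>v. v extreme_point_of P \<longrightarrow> valency a b P \<Gamma> v \<noteq> 2"
    then show "\<exists>\<epsilon>0>0. \<forall>\<epsilon>. 0 < \<epsilon> \<and> \<epsilon> < \<epsilon>0 \<longrightarrow> simple_polytope (graph_trunc a b P \<Gamma> \<epsilon>)"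
      using eventually_simple_if_no_valency_2 by (auto simp: eventually_at_right_field)
  qed
qed

end
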